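(* If $g\in G(V)$ satisfies $(\flat f_{0,V})(\iota(g,\mathrm{id}_V))\neq0$, then $g\in P$.
   Context: Let $\mathbb F$ be a finite field of odd cardinality $q$, $\mathbb E/\mathbb F$ of degree $1$ or $2$ with Galois generator $x\mapsto\bar x$; $\mathcal C$ algebraically closed of characteristic not dividing $q$. $(V,\langle\cdot,\cdot\rangle_V)$ is an $\epsilon$-sesquilinear space over $\mathbb E$ (nondegenerate or zero form; $\epsilon_V=1$ if $\mathbb E\ne\mathbb F$), $G(V)$ its isometry group. $V^\square=V^+\oplus V^-$ with $\langle v_1^++w_1^-,v_2^++w_2^-\rangle=\langle v_1,v_2\rangle-\langle w_1,w_2\rangle$; $V^\Delta=\{v^++v^-\}$; $\iota(g_1,g_2)(v^++w^-)=(g_1v)^++(g_2w)^-$; $P_V$ the stabilizer of $V^\Delta$. For $\chi:\mathbb E^\times\to\mathcal C^\times$, $\chi^{-c}(x)=\chi(\bar x)^{-1}$; $I_V(\chi)$ is the space of $f$ on $G(V^\square)$ with $f(pg)=\chi(\det(p|_{V^\Delta}))f(g)$ ($p\in P_V$, nondegenerate case), resp. $f(pg)=\chi(\det(p|_{V^\Delta}))\chi^{-c}(\det(p|_{V^\square/V^\Delta}))f(g)$ (zero-form case); $f_{0,V}$ is the element of $I_V(\chi)$ supported on $P_V$ with $f_{0,V}(\mathrm{id})=1$; $I_X(\chi),I_{V_0}(\chi)$ are defined likewise. Parabolic setup: nondegenerate case $V=X\oplus V_0\oplus Y$ ($X,Y$ totally isotropic in duality, $V_0=(X\oplus Y)^\perp$),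 $P\subset G(V)$ the stabilizer of $0\subset X\subset X\oplus V_0\subset V$ with unipotent radical $N$, $P^\square_X\subset G(V^\square)$ the stabilizer of $0\subset X^\square\subset X^\square\oplus V_0^\square\subset V^\square$ with Levi $L^\square_X$ (stabilizer of $X^\square,V_0^\square,Y^\square$); zero-form case $V=X\oplus V_0$, $P$ the stabilizer of $X$, $P^\square_X$ the stabilizer of $X^\square$ with Levi the stabilizer of $X^\square$ and $V_0^\square$. $\flat f$ is defined by $(\flat f)(g)(l)=\sum_{(u_1,u_2)\in N^\Delta\backslash(N\times N)}f(\iota(u_1,u_2)lg)$ for $g\in G(V^\square)$, $l\in L^\square_X$, with $N^\Delta=\{(u,u)\}$; "$(\flat f)(g)\neq0$" means this function of $l$ is not identically zero. *)

theory Defs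
  imports "HOL-Analysis.Analysis" "HOL-Computational_Algebra.Polynomial"
begin

text \<open>E is a finite field type 'e; the Galois generator of E/F is an
 involutive field automorphism sigma of E with fixed field F.  V = 'e^'n (coordinates in a
 basis), endomorphisms of V are matrices 'e^'n^'n acting by (*v).
 V-square = V^+ (+) V^- is 'e^('n+'n), with Inl-coordinates = V^+ and Inr-coordinates = V^-.\<close>

definition galois_inv :: "('e::field \<Rightarrow> 'e) \<Rightarrow> bool" where
  "galois_inv \<sigma> \<longleftrightarrow> (\<forall>x y. \<sigma> (x + y) = \<sigma> x + \<sigma> y) \<and> (\<forall>x y. \<sigma> (x * y) = \<sigma> x * \<sigma> y)
     \<and> \<sigma> 1 = 1 \<and> (\<forall>x. \<sigma> (\<sigma> x) = x)"

definition fixed_field :: "('e \<Rightarrow> 'e) \<Rightarrow> 'e set" where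
  "fixed_field \<sigma> = {x. \<sigma> x = x}"

definition eps_sesq_form ::
  "('e::field \<Rightarrow> 'e) \<Rightarrow> 'e \<Rightarrow> ('e^'n::finite \<Rightarrow> 'e^'n \<Rightarrow> 'e) \<Rightarrow> bool" where
  "eps_sesq_form \<sigma> \<epsilon> B \<longleftrightarrow>
     (\<forall>x y z. B (x + y) z = B x z + B y z) \<and> (\<forall>a x z. B (a *s x) z = a * B x z) \<and>
     (\<forall>x y z. B z (x + y) = B z x + B z y) \<and> (\<forall>a x z. B z (a *s x) = \<sigma> a * B z x) \<and>
     (\<forall>v w. B w v = \<epsilon> * \<sigma> (B v w)) \<and> (\<epsilon> = 1 \<or> \<epsilon> = -1) \<and>
     ((\<exists>x. \<sigma> x \<noteq> x) \<longrightarrow> \<epsilon> = 1)"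

definition nondegenerate :: "('e::field^'n::finite \<Rightarrow> 'e^'n \<Rightarrow> 'e) \<Rightarrow> bool" where
  "nondegenerate B \<longleftrightarrow> (\<forall>v. (\<forall>w. B v w = 0) \<longrightarrow> v = 0)"

definition zero_form :: "('e::field^'n::finite \<Rightarrow> 'e^'n \<Rightarrow> 'e) \<Rightarrow> bool" where
  "zero_form B \<longleftrightarrow> (\<forall>v w. B v w = 0)"

definition isom_group :: "('e::field^'n::finite \<Rightarrow> 'e^'n \<Rightarrow> 'e) \<Rightarrow> ('e^'n^'n) set" where
  "isom_group B = {A. invertible A \<and> (\<forall>v w. B (A *v v) (A *v w) = B v w)}"

definition matimg :: "'e::field^'n^'n::finite \<Rightarrow> ('e^'n) set \<Rightarrow> ('e^'n) set" where
  "matimg A S = (\<lambda>v. A *v v) ` S"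

definition setsum :: "('e::field^'n::finite) set \<Rightarrow> ('e^'n) set \<Rightarrow> ('e^'n) set" where
  "setsum S T = {s + t | s t. s \<in> S \<and> t \<in> T}"

definition pl :: "'e^('n::finite + 'n) \<Rightarrow> 'e^'n" where "pl x = (\<chi> i. x $ Inl i)"
definition mi :: "'e^('n::finite + 'n) \<Rightarrow> 'e^'n" where "mi x = (\<chi> i. x $ Inr i)"
definition pm :: "'e^'n::finite \<Rightarrow> 'e^'n \<Rightarrow> 'e^('n + 'n)" where
  "pm v w = (\<chi> k. case k of Inl i \<Rightarrow> v $ i | Inr i \<Rightarrow> w $ i)"  \<comment> \<open>v^+ + w^-\<close>

definition sq_form :: "('e::field^'n::finite \<Rightarrow> 'e^'n \<Rightarrow> 'e) \<Rightarrow> 'e^('n+'n) \<Rightarrow> 'e^('n+'n) \<Rightarrow> 'e" where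
  "sq_form B x y = B (pl x) (pl y) - B (mi x) (mi y)"

definition Vdelta :: "('e::field^('n::finite+'n)) set" where
  "Vdelta = {x. pl x = mi x}"

definition sq_sub :: "('e::field^'n::finite) set \<Rightarrow> ('e^('n+'n)) set" where
  "sq_sub S = {x. pl x \<in> S \<and> mi x \<in> S}"   \<comment> \<open>S^square = S^+ (+) S^-\<close>

definition iota :: "'e::field^'n^'n::finite \<Rightarrow> 'e^'n^'n \<Rightarrow> 'e^('n+'n)^('n+'n)" where
  "iota g1 g2 = (\<chi> k l. case (k, l) of (Inl a, Inl b) \<Rightarrow> g1 $ a $ b
                         | (Inr a, Inr b) \<Rightarrow> g2 $ a $ b | _ \<Rightarrow> 0)"

definition P_V :: "('e::field^'n::finite \<Rightarrow> 'e^'n \<Rightarrow> 'e) \<Rightarrow> ('e^('n+'n)^('n+'n)) set" where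
  "P_V B = {p \<in> isom_group (sq_form B). matimg p Vdelta = Vdelta}"

text \<open>det(p|V^Delta), computed in the basis e_j^+ + e_j^- of V^Delta.\<close>
definition det_delta :: "'e::field^('n::finite+'n)^('n+'n) \<Rightarrow> 'e" where
  "det_delta p = det (\<chi> i j. pl (p *v pm (axis j 1) (axis j 1)) $ i)"

text \<open>det(p|V^square/V^Delta), via V^square/V^Delta = V, [v^+ + w^-] -> v - w.\<close>
definition det_quot :: "'e::field^('n::finite+'n)^('n+'n) \<Rightarrow> 'e" where
  "det_quot p = det (\<chi> i j. (pl (p *v pm (axis j 1) 0) - mi (p *v pm (axis j 1) 0)) $ i)"

text \<open>f_{0,V}: the element of I_V(chi) supported on P_V with value 1 at the identity.\<close>
definition f0 :: "('e::field \<Rightarrow> 'e) \<Rightarrow> ('e \<Rightarrow> 'c::field) \<Rightarrow> ('e^'n::finite \<Rightarrow> 'e^'n \<Rightarrow> 'e)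
                  \<Rightarrow> 'e^('n+'n)^('n+'n) \<Rightarrow> 'c" where
  "f0 \<sigma> chr B h =
     (if h \<in> P_V B then
        (if zero_form B then chr (det_delta h) * inverse (chr (\<sigma> (det_quot h)))
         else chr (det_delta h))
      else 0)"

definition is_character :: "('e::field \<Rightarrow> 'c::field) \<Rightarrow> bool" where
  "is_character chr \<longleftrightarrow> (\<forall>x. x \<noteq> 0 \<longrightarrow> chr x \<noteq> 0) \<and>
      (\<forall>x y. x \<noteq> 0 \<longrightarrow> y \<noteq> 0 \<longrightarrow> chr (x * y) = chr x * chr y)"

definition nd_parabolic :: "('e::field^'n::finite \<Rightarrow> 'e^'n \<Rightarrow> 'e) \<Rightarrow> ('e^'n) set \<Rightarrow> ('e^'n) set \<Rightarrow> bool" where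
  "nd_parabolic B X Y \<longleftrightarrow> vec.subspace X \<and> vec.subspace Y \<and>
     (\<forall>x\<in>X. \<forall>x'\<in>X. B x x' = 0) \<and> (\<forall>y\<in>Y. \<forall>y'\<in>Y. B y y' = 0) \<and>
     (\<forall>x\<in>X. (\<forall>y\<in>Y. B x y = 0) \<longrightarrow> x = 0) \<and> (\<forall>y\<in>Y. (\<forall>x\<in>X. B y x = 0) \<longrightarrow> y = 0)"

definition orth :: "('e::field^'n::finite \<Rightarrow> 'e^'n \<Rightarrow> 'e) \<Rightarrow> ('e^'n) set \<Rightarrow> ('e^'n) set" where
  "orth B S = {v. \<forall>w\<in>S. B v w = 0}"

definition P_nd where
  "P_nd B X V0 = {g \<in> isom_group B. matimg g X = X \<and> matimg g (setsum X V0) = setsum X V0}"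

text \<open>Unipotent radical of the flag stabilizer: elements of P acting trivially on the
 graded pieces X, (X+V0)/X, V/(X+V0).\<close>
definition N_nd where
  "N_nd B X V0 = {g \<in> P_nd B X V0. (\<forall>x\<in>X. g *v x = x) \<and>
       (\<forall>v\<in>setsum X V0. g *v v - v \<in> X) \<and> (\<forall>v. g *v v - v \<in> setsum X V0)}"

definition L_nd where
  "L_nd B X V0 Y = {h \<in> isom_group (sq_form B). matimg h (sq_sub X) = sq_sub X \<and>
       matimg h (sq_sub V0) = sq_sub V0 \<and> matimg h (sq_sub Y) = sq_sub Y}"

definition z_parabolic :: "('e::field^'n::finite) set \<Rightarrow> ('e^'n) set \<Rightarrow> bool" where
  "z_parabolic X V0 \<longleftrightarrow> vec.subspace X \<and> vec.subspace V0 \<and> X \<inter> V0 = {0} \<and> setsum X V0 = UNIV"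

definition P_z where
  "P_z B X = {g \<in> isom_group B. matimg g X = X}"

definition N_z where
  "N_z B X = {g \<in> P_z B X. (\<forall>x\<in>X. g *v x = x) \<and> (\<forall>v. g *v v - v \<in> X)}"

definition L_z where
  "L_z B X V0 = {h \<in> isom_group (sq_form B). matimg h (sq_sub X) = sq_sub X \<and>
       matimg h (sq_sub V0) = sq_sub V0}"

definition diag_cosets :: "('e::field^'n::finite^'n) set \<Rightarrow> (('e^'n^'n) \<times> ('e^'n^'n)) set set" where
  "diag_cosets N = {(\<lambda>u. (u ** u1, u ** u2)) ` N | u1 u2. u1 \<in> N \<and> u2 \<in> N}"
  \<comment> \<open>N^Delta \ (N x N)\<close>

definition flat ::
  "('e::field^('n::finite+'n)^('n+'n) \<Rightarrow> 'c::field) \<Rightarrow> ('e^'n^'n) set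
     \<Rightarrow> 'e^('n+'n)^('n+'n) \<Rightarrow> 'e^('n+'n)^('n+'n) \<Rightarrow> 'c" where
  "flat f N g l = (\<Sum>c\<in>diag_cosets N.
      let r = (SOME r. r \<in> c) in f (iota (fst r) (snd r) ** l ** g))"

end

theory Submission
  imports Defs
begin

text \<open>Some summand of the sum defining \<open>\<flat>f\<^sub>0(\<iota>(g, 1))\<close> is nonzero, so
  \<open>h = \<iota>(a, b) l \<iota>(g, 1)\<close> lies in \<open>P\<^sub>V\<close> for some \<open>a, b\<close> in \<open>N N\<close> and \<open>l \<in> L\<close>; in
  particular \<open>h\<close> permutes \<open>V\<^sup>\<Delta>\<close>.  Let \<open>S\<close> be any subspace in the flag defining \<open>P\<close>.
  Since \<open>\<iota>(a, b)\<close> and \<open>l\<close> preserve \<open>S\<^sup>\<box>\<close>, the vectors \<open>w \<in> V\<^sup>\<Delta>\<close> with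
  \<open>\<iota>(g, 1) w \<in> S\<^sup>\<box>\<close> are those with \<open>h w \<in> S\<^sup>\<box>\<close>; they lie in \<open>S\<^sup>\<Delta>\<close> (look at the
  \<open>V\<^sup>-\<close>-component) and \<open>h\<close> maps them onto \<open>S\<^sup>\<Delta>\<close>, so by counting they are all of
  \<open>S\<^sup>\<Delta>\<close>.  Applied to \<open>v\<^sup>+ + v\<^sup>-\<close> this says \<open>g S \<subseteq> S\<close>, hence \<open>g S = S\<close>.\<close>

lemma sum_UNIV_Plus:
  "sum f (UNIV :: ('a::finite + 'b::finite) set) = (\<Sum>j\<in>UNIV. f (Inl j)) + (\<Sum>j\<in>UNIV. f (Inr j))"
  using sum.Plus[of "UNIV :: 'a set" "UNIV :: 'b set" f] by (simp add: o_def)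

lemma pl_pm [simp]: "pl (pm v w) = v" and mi_pm [simp]: "mi (pm v w) = w"
  by (simp_all add: pl_def mi_def pm_def vec_eq_iff)

lemma pl_add: "pl (x + y) = pl x + pl y" and mi_add: "mi (x + y) = mi x + mi y"
  by (simp_all add: pl_def mi_def vec_eq_iff)

lemma pm_pl_mi: "pm (pl x) (mi x) = x"
  by (simp add: pl_def mi_def pm_def vec_eq_iff split: sum.split)

lemma pm_add: "pm a b + pm c d = pm (a + c) (b + d)"
  by (simp add: pm_def vec_eq_iff split: sum.split)

lemma pl_iota_mult: "pl (iota a b *v x) = a *v pl x"
  by (simp add: pl_def iota_def vec_eq_iff matrix_vector_mult_def sum_UNIV_Plus)

lemma mi_iota_mult: "mi (iota a b *v x) = b *v mi x"
  by (simp add: mi_def iota_def vec_eq_iff matrix_vector_mult_def sum_UNIV_Plus)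

lemma pm_mem_sq_sub_iff [simp]: "pm v w \<in> sq_sub S \<longleftrightarrow> v \<in> S \<and> w \<in> S"
  by (simp add: sq_sub_def)

lemma pm_mem_Vdelta_iff [simp]: "pm v w \<in> Vdelta \<longleftrightarrow> v = w"
  by (simp add: Vdelta_def)

lemma sq_sub_setsum: "sq_sub (setsum S T) = setsum (sq_sub S) (sq_sub T)"
proof (intro set_eqI iffI)
  fix x assume "x \<in> sq_sub (setsum S T)"
  then obtain s1 t1 s2 t2 where "pl x = s1 + t1" "mi x = s2 + t2" "s1 \<in> S" "s2 \<in> S" "t1 \<in> T" "t2 \<in> T"
    unfolding sq_sub_def setsum_def by blast
  moreover from this have "x = pm s1 s2 + pm t1 t2"
    by (metis pm_add pm_pl_mi)
  ultimately show "x \<in> setsum (sq_sub S) (sq_sub T)"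
    unfolding setsum_def by force
next
  fix x assume "x \<in> setsum (sq_sub S) (sq_sub T)"
  then show "x \<in> sq_sub (setsum S T)"
    unfolding sq_sub_def setsum_def by (auto simp: pl_add mi_add; blast)
qed

lemma matimg_setsum: "matimg A (setsum S T) = setsum (matimg A S) (matimg A T)"
proof (intro set_eqI iffI)
  fix y assume "y \<in> matimg A (setsum S T)"
  then obtain s t where "s \<in> S" "t \<in> T" "y = A *v s + A *v t"
    unfolding matimg_def setsum_def by (auto simp: matrix_vector_right_distrib)
  then show "y \<in> setsum (matimg A S) (matimg A T)"
    unfolding matimg_def setsum_def by blast
next
  fix y assume "y \<in> setsum (matimg A S) (matimg A T)"
  then obtain s t where "s \<in> S" "t \<in> T" "y = A *v (s + t)"
    unfolding matimg_def setsum_def by (auto simp: matrix_vector_right_distrib)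
  then show "y \<in> matimg A (setsum S T)"
    unfolding matimg_def setsum_def by blast
qed

lemma invertible_mult_eq_iff:
  fixes A :: "'a::field^'n::finite^'n"
  assumes "invertible A"
  shows "A *v x = A *v y \<longleftrightarrow> x = y"
  using assms unfolding invertible_def
  by (metis matrix_vector_mul_assoc matrix_vector_mul_lid)

lemma mult_mem_iff_of_matimg_eq:
  fixes A :: "'a::field^'n::finite^'n"
  assumes "invertible A" and "matimg A S = S"
  shows "A *v x \<in> S \<longleftrightarrow> x \<in> S"
  using assms unfolding matimg_def by (metis image_iff invertible_mult_eq_iff)

lemma matimg_eq_of_subset:
  fixes A :: "'a::{field,finite}^'n::finite^'n"
  assumes "invertible A" and "matimg A S \<subseteq> S"
  shows "matimg A S = S"
proof -
  have "inj_on ((*v) A) S"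
    using assms(1) by (simp add: inj_on_def invertible_mult_eq_iff)
  then have "card (matimg A S) = card S"
    unfolding matimg_def by (rule card_image)
  with assms(2) show ?thesis
    using card_subset_eq finite by blast
qed

text \<open>\<open>f\<close> maps \<open>{w \<in> D. f w \<in> Q}\<close> onto \<open>D \<inter> Q\<close>, so counting rules out a proper inclusion.\<close>
lemma preimage_eq_of_subset:
  assumes "finite D" and "f ` D = D" and "{w \<in> D. f w \<in> Q} \<subseteq> Q"
  shows "{w \<in> D. f w \<in> Q} = D \<inter> Q"
proof -
  let ?T = "{w \<in> D. f w \<in> Q}"
  have "D \<inter> Q \<subseteq> f ` ?T"
  proof
    fix y assume "y \<in> D \<inter> Q"
    then obtain w where "w \<in> D" "y = f w"
      using assms(2) by (metis IntD1 imageE)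
    with \<open>y \<in> D \<inter> Q\<close> show "y \<in> f ` ?T"
      by blast
  qed
  then have "card (D \<inter> Q) \<le> card (f ` ?T)"
    using assms(1) by (intro card_mono) auto
  also have "\<dots> \<le> card ?T"
    by (rule card_image_le) (simp add: assms(1))
  finally show ?thesis
    using assms by (intro card_seteq) auto
qed

lemma iota_mult_mem_sq_sub_iff:
  assumes "\<And>y. a *v y \<in> S \<longleftrightarrow> y \<in> S" and "\<And>y. b *v y \<in> S \<longleftrightarrow> y \<in> S"
  shows "iota a b *v x \<in> sq_sub S \<longleftrightarrow> x \<in> sq_sub S"
  using assms by (simp add: sq_sub_def pl_iota_mult mi_iota_mult)

lemma mult_mem_of_iota_Vdelta:
  fixes g a b :: "'e::{field,finite}^'n::finite^'n" and l :: "'e^('n+'n)^('n+'n)"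
  assumes a: "\<And>y. a *v y \<in> S \<longleftrightarrow> y \<in> S" and b: "\<And>y. b *v y \<in> S \<longleftrightarrow> y \<in> S"
    and l: "\<And>x. l *v x \<in> sq_sub S \<longleftrightarrow> x \<in> sq_sub S"
    and h: "matimg (iota a b ** l ** iota g (mat 1)) Vdelta = Vdelta"
    and "v \<in> S"
  shows "g *v v \<in> S"
proof -
  let ?G = "iota g (mat 1)" and ?h = "iota a b ** l ** iota g (mat 1)"
  have "?h *v w \<in> sq_sub S \<longleftrightarrow> ?G *v w \<in> sq_sub S" for w
    by (simp add: matrix_vector_mul_assoc[symmetric] iota_mult_mem_sq_sub_iff[OF a b] l)
  then have T: "{w \<in> Vdelta. ?h *v w \<in> sq_sub S} = {w \<in> Vdelta. ?G *v w \<in> sq_sub S}"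
    by blast
  have "{w \<in> Vdelta. ?G *v w \<in> sq_sub S} \<subseteq> sq_sub S"
    by (auto simp: Vdelta_def sq_sub_def pl_iota_mult mi_iota_mult)
  then have "{w \<in> Vdelta. ?G *v w \<in> sq_sub S} = Vdelta \<inter> sq_sub S"
    using preimage_eq_of_subset[of Vdelta "(*v) ?h" "sq_sub S"] h
    by (simp add: T matimg_def)
  moreover have "pm v v \<in> Vdelta \<inter> sq_sub S"
    using \<open>v \<in> S\<close> by simp
  ultimately have "?G *v pm v v \<in> sq_sub S"
    by blast
  then show ?thesis
    by (simp add: sq_sub_def pl_iota_mult)
qed

lemma flat_neq_zeroE:
  assumes "flat f N G l \<noteq> 0"
  obtains u u1 u2 where "u \<in> N" "u1 \<in> N" "u2 \<in> N"
    and "f (iota (u ** u1) (u ** u2) ** l ** G) \<noteq> 0"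
proof -
  obtain c where "c \<in> diag_cosets N"
    and c: "(let r = (SOME r. r \<in> c) in f (iota (fst r) (snd r) ** l ** G)) \<noteq> 0"
    using assms unfolding flat_def by (meson sum.not_neutral_contains_not_neutral)
  then obtain u1 u2 where c_eq: "c = (\<lambda>u. (u ** u1, u ** u2)) ` N" "u1 \<in> N" "u2 \<in> N"
    unfolding diag_cosets_def by blast
  then have "(SOME r. r \<in> c) \<in> c"
    by (meson ex_in_conv image_eqI someI_ex)
  then obtain u where "u \<in> N" "(SOME r. r \<in> c) = (u ** u1, u ** u2)"
    using c_eq by blast
  with c c_eq show thesis
    by (intro that) (simp_all add: Let_def)
qed

lemma matimg_Vdelta_of_f0_neq_zero:
  assumes "f0 \<sigma> chr B h \<noteq> 0"
  shows "matimg h Vdelta = Vdelta"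
  using assms unfolding f0_def P_V_def by (auto split: if_splits)

lemma matimg_eq_of_flat_f0_neq_zero:
  fixes g :: "'e::{field,finite}^'n::finite^'n" and l :: "'e^('n+'n)^('n+'n)"
  assumes "flat (f0 \<sigma> chr B) N (iota g (mat 1)) l \<noteq> 0"
    and N: "\<And>u. u \<in> N \<Longrightarrow> invertible u \<and> matimg u S = S"
    and "invertible l" and "matimg l (sq_sub S) = sq_sub S"
    and "invertible g"
  shows "matimg g S = S"
proof -
  obtain u u1 u2 where "u \<in> N" "u1 \<in> N" "u2 \<in> N"
    and f0: "f0 \<sigma> chr B (iota (u ** u1) (u ** u2) ** l ** iota g (mat 1)) \<noteq> 0"
    using assms(1) by (rule flat_neq_zeroE)
  have h: "matimg (iota (u ** u1) (u ** u2) ** l ** iota g (mat 1)) Vdelta = Vdelta"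
    using f0 by (rule matimg_Vdelta_of_f0_neq_zero)
  have N_mem_iff: "u' *v y \<in> S \<longleftrightarrow> y \<in> S" if "u' \<in> N" for u' y
    using N[OF that] mult_mem_iff_of_matimg_eq by blast
  have "g *v v \<in> S" if "v \<in> S" for v
    by (rule mult_mem_of_iota_Vdelta[OF _ _ _ h that])
      (simp_all add: matrix_vector_mul_assoc[symmetric] N_mem_iff \<open>u \<in> N\<close> \<open>u1 \<in> N\<close> \<open>u2 \<in> N\<close>
        mult_mem_iff_of_matimg_eq[OF assms(3,4)])
  then show ?thesis
    using \<open>invertible g\<close> by (intro matimg_eq_of_subset) (auto simp: matimg_def)
qed

theorem mainTheorem10:
  fixes \<sigma> :: "'e::{field,finite} \<Rightarrow> 'e"
    and \<epsilon> :: 'e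
    and B :: "'e^'n \<Rightarrow> 'e^'n \<Rightarrow> 'e"
    and chr :: "'e \<Rightarrow> 'c::alg_closed_field"
    and X Y V0 :: "('e^'n) set"
    and P N :: "('e^'n^'n) set"
    and L :: "('e^('n+'n)^('n+'n)) set"
    and g :: "'e^'n^'n"
  assumes "galois_inv \<sigma>"
    and "odd (card (fixed_field \<sigma>))"
    and "\<not> CHAR('c) dvd card (fixed_field \<sigma>)"
    and "eps_sesq_form \<sigma> \<epsilon> B"
    and "is_character chr"
    and "(nondegenerate B \<and> nd_parabolic B X Y \<and> V0 = orth B (setsum X Y) \<and>
          P = P_nd B X V0 \<and> N = N_nd B X V0 \<and> L = L_nd B X V0 Y)
       \<or> (zero_form B \<and> z_parabolic X V0 \<and>
          P = P_z B X \<and> N = N_z B X \<and> L = L_z B X V0)"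
    and "g \<in> isom_group B"
    and "\<exists>l\<in>L. flat (f0 \<sigma> chr B) N (iota g (mat 1)) l \<noteq> 0"
  shows "g \<in> P"
proof -
  obtain l where "l \<in> L" and flat: "flat (f0 \<sigma> chr B) N (iota g (mat 1)) l \<noteq> 0"
    using assms(8) by blast
  have g: "invertible g"
    using assms(7) by (simp add: isom_group_def)
  note stable = matimg_eq_of_flat_f0_neq_zero[OF flat _ _ _ g]
  from assms(6) show ?thesis
  proof (elim disjE conjE)
    assume "P = P_nd B X V0" "N = N_nd B X V0" "L = L_nd B X V0 Y"
    then have N: "invertible u \<and> matimg u X = X \<and> matimg u (setsum X V0) = setsum X V0"
      if "u \<in> N" for u
      using that by (simp add: N_nd_def P_nd_def isom_group_def)
    have l: "invertible l" "matimg l (sq_sub X) = sq_sub X" "matimg l (sq_sub V0) = sq_sub V0"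
      using \<open>l \<in> L\<close> \<open>L = L_nd B X V0 Y\<close> by (simp_all add: L_nd_def isom_group_def)
    then have "matimg l (sq_sub (setsum X V0)) = sq_sub (setsum X V0)"
      by (simp add: sq_sub_setsum matimg_setsum)
    with N l have "matimg g X = X" "matimg g (setsum X V0) = setsum X V0"
      by (simp_all add: stable)
    with assms(7) show ?thesis
      by (simp add: \<open>P = P_nd B X V0\<close> P_nd_def)
  next
    assume "P = P_z B X" "N = N_z B X" "L = L_z B X V0"
    moreover from this have "invertible u \<and> matimg u X = X" if "u \<in> N" for u
      using that by (simp add: N_z_def P_z_def isom_group_def)
    moreover have "invertible l" "matimg l (sq_sub X) = sq_sub X"
      using \<open>l \<in> L\<close> \<open>L = L_z B X V0\<close> by (simp_all add: L_z_def isom_group_def)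
    ultimately show ?thesis
      using assms(7) stable by (simp add: P_z_def)
  qed
qed

end
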